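(* Let $\Omega\subset\mathbb{R}^n$ be open, $\omega$ a weight, and $\varphi\in\Phi_{\mathrm w}(\Omega)$. Then $\varphi$ satisfies (A2)$_\omega$ if and only if there exist a weak $\Phi$-function $\varphi_\infty:[0,\infty)\to[0,\infty]$ (independent of $x$), a function $h\in L^1(\Omega,\omega)\cap L^\infty(\Omega)$ and $\beta\in(0,1]$ such that for almost every $x\in\Omega$: $\varphi(x,\beta t)\le\varphi_\infty(t)+h(x)$ whenever $\varphi_\infty(t)\in[0,1]$, and $\varphi_\infty(\beta t)\le\varphi(x,t)+h(x)$ whenever $\varphi(x,t)\in[0,1]$.
   Context: A weight is a nonnegative locally integrable function $\omega$ on $\mathbb{R}^n$; $L^1(\Omega,\omega)$ is the set of measurable $h$ with $\int_\Omega|h|\omega\,dx<\infty$. For $p>0$, $\varphi$ satisfies (aInc)$_p$ if there is $a\ge1$ with $\varphi(x,s)/s^p\le a\,\varphi(x,t)/t^p$ for all $0<s<t$ and a.e. $x$. $\varphi:\Omega\times[0,\infty)\to[0,\infty]$ is a $\Phi$-prefunction if $x\mapsto\varphi(x,|f(x)|)$ is measurable for every measurable $f$, and for a.e. $x$ the map $t\mapsto\varphi(x,t)$ is increasing with $\varphi(x,0)=\lim_{t\to0^+}\varphi(x,t)=0$ and $\lim_{t\to\infty}\varphi(x,t)=\infty$. $\Phi_{\mathrm w}(\Omega)$ is the set of $\Phi$-prefunctions satisfying (aInc)$_1$; a weak $\Phi$-function independent of $x$ is one of these with no $x$-dependence. (A2)$_\omega$: for every $s>0$ there exist $\beta_2\in(0,1]$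 and $h\in L^1(\Omega,\omega)\cap L^\infty(\Omega)$, $h\ge0$, such that $\varphi(x,\beta_2t)\le\varphi(y,t)+h(x)+h(y)$ for a.e. $x,y\in\Omega$ whenever $\varphi(y,t)\in[0,s]$. *)

theory Defs
  imports "HOL-Analysis.Analysis"
begin

definition weight :: "('a::euclidean_space \<Rightarrow> real) \<Rightarrow> bool" where
  "weight \<omega> \<longleftrightarrow> (\<forall>x. 0 \<le> \<omega> x) \<and>
     (\<forall>K. compact K \<longrightarrow> integrable (lebesgue_on K) \<omega>)"

definition L1w_Linf :: "'a::euclidean_space set \<Rightarrow> ('a \<Rightarrow> real) \<Rightarrow> ('a \<Rightarrow> real) \<Rightarrow> bool" where
  "L1w_Linf \<Omega> \<omega> h \<longleftrightarrow> h \<in> borel_measurable (lebesgue_on \<Omega>) \<and>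
     (\<integral>\<^sup>+ x. ennreal (\<bar>h x\<bar> * \<omega> x) \<partial>(lebesgue_on \<Omega>)) < \<infinity> \<and>
     (\<exists>M. AE x in lebesgue_on \<Omega>. \<bar>h x\<bar> \<le> M)"

definition Phi_pre :: "'a::euclidean_space set \<Rightarrow> ('a \<Rightarrow> real \<Rightarrow> ennreal) \<Rightarrow> bool" where
  "Phi_pre \<Omega> \<phi> \<longleftrightarrow>
     (\<forall>f. f \<in> borel_measurable (lebesgue_on \<Omega>) \<longrightarrow>
        (\<lambda>x. \<phi> x \<bar>f x\<bar>) \<in> borel_measurable (lebesgue_on \<Omega>)) \<and>
     (AE x in lebesgue_on \<Omega>. mono_on {0..} (\<phi> x) \<and> \<phi> x 0 = 0 \<and>
        (\<phi> x \<longlongrightarrow> 0) (at_right 0) \<and> (\<phi> x \<longlongrightarrow> \<infinity>) at_top)"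

definition aInc :: "real \<Rightarrow> 'a::euclidean_space set \<Rightarrow> ('a \<Rightarrow> real \<Rightarrow> ennreal) \<Rightarrow> bool" where
  "aInc p \<Omega> \<phi> \<longleftrightarrow> (\<exists>a\<ge>1. AE x in lebesgue_on \<Omega>. \<forall>s t. 0 < s \<and> s < t \<longrightarrow>
       \<phi> x s / ennreal (s powr p) \<le> ennreal a * (\<phi> x t / ennreal (t powr p)))"

definition Phi_w :: "'a::euclidean_space set \<Rightarrow> ('a \<Rightarrow> real \<Rightarrow> ennreal) \<Rightarrow> bool" where
  "Phi_w \<Omega> \<phi> \<longleftrightarrow> Phi_pre \<Omega> \<phi> \<and> aInc 1 \<Omega> \<phi>"

definition weak_Phi_const :: "(real \<Rightarrow> ennreal) \<Rightarrow> bool" where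
  "weak_Phi_const \<psi> \<longleftrightarrow> mono_on {0..} \<psi> \<and> \<psi> 0 = 0 \<and>
     (\<psi> \<longlongrightarrow> 0) (at_right 0) \<and> (\<psi> \<longlongrightarrow> \<infinity>) at_top \<and>
     (\<exists>a\<ge>1. \<forall>s t. 0 < s \<and> s < t \<longrightarrow> \<psi> s / ennreal s \<le> ennreal a * (\<psi> t / ennreal t))"

definition A2w :: "'a::euclidean_space set \<Rightarrow> ('a \<Rightarrow> real) \<Rightarrow> ('a \<Rightarrow> real \<Rightarrow> ennreal) \<Rightarrow> bool" where
  "A2w \<Omega> \<omega> \<phi> \<longleftrightarrow> (\<forall>s>0. \<exists>\<beta>2 h. 0 < \<beta>2 \<and> \<beta>2 \<le> 1 \<and> L1w_Linf \<Omega> \<omega> h \<and> (\<forall>x. 0 \<le> h x) \<and>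
     (AE z in (lebesgue_on \<Omega> \<Otimes>\<^sub>M lebesgue_on \<Omega>). \<forall>t\<ge>0.
        \<phi> (snd z) t \<le> ennreal s \<longrightarrow>
        \<phi> (fst z) (\<beta>2 * t) \<le> \<phi> (snd z) t + ennreal (h (fst z)) + ennreal (h (snd z))))"

end

theory Submission
  imports Defs
begin

text \<open>
  Say that \<open>\<phi>\<close> is dominated by \<open>\<psi> + K\<close> below level \<open>s\<close> if \<open>\<phi>(\<beta>t) \<le> \<psi>(t) + K\<close>
  whenever \<open>\<psi>(t) \<le> s\<close>. If \<open>\<phi>\<^sub>\<infinity>\<close> and \<open>\<phi>(x,\<cdot>)\<close> dominate each other below level 1
  with error \<open>h(x)\<close>, then \<open>(A2)\<^sub>\<omega>\<close> follows by passing from \<open>\<phi>(y,\<cdot>)\<close> through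
  \<open>\<phi>\<^sub>\<infinity>\<close> to \<open>\<phi>(x,\<cdot>)\<close>: the argument is shrunk twice, by factors coming from
  \<open>(aInc)\<^sub>1\<close>, so that values below \<open>s\<close> and then below \<open>1 + sup h\<close> are brought below 1.

  Conversely, \<open>(A2)\<^sub>\<omega>\<close> at level 2 and Fubini give a co-null set \<open>S\<close> of points \<open>y\<close>
  such that \<open>\<phi>(y,\<cdot>)\<close> and \<open>\<phi>(x,\<cdot>)\<close> dominate each other below level 2 with error
  \<open>h(x) + h(y)\<close> for almost every \<open>x\<close>. Choose \<open>y\<^sub>n \<in> S\<close> with
  \<open>h(y\<^sub>n) \<rightarrow> c = inf\<^sub>S h\<close> and put \<open>\<phi>\<^sub>\<infinity>(t) = liminf\<^sub>n \<phi>(y\<^sub>n,t)\<close>. Then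
  \<open>\<phi>\<^sub>\<infinity>\<close> and almost every \<open>\<phi>(x,\<cdot>)\<close> dominate each other below level 1 with error
  \<open>h(x) + c \<le> 2h(x)\<close>, which is still in \<open>L\<^sup>1(\<omega>) \<inter> L\<^sup>\<infinity>\<close>. The liminf preserves
  monotonicity and \<open>(aInc)\<^sub>1\<close>, and \<open>\<phi>\<^sub>\<infinity>\<close> inherits the limits at \<open>0\<close> and \<open>\<infinity>\<close>
  from any single \<open>\<phi>(x\<^sub>0,\<cdot>)\<close>.
\<close>

lemma sigma_finite_lebesgue: "sigma_finite_measure (lebesgue :: 'a::euclidean_space measure)"
proof
  show "\<exists>A. countable A \<and> A \<subseteq> sets lebesgue \<and> \<Union> A = space (lebesgue :: 'a measure) \<and>
      (\<forall>a\<in>A. emeasure lebesgue a \<noteq> \<infinity>)"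
    using emeasure_lborel_cball_finite[of "0::'a", THEN less_imp_neq]
    by (intro exI[of _ "range (\<lambda>n::nat. cball 0 (real n))"]) (auto simp: real_arch_simple)
qed

lemma sigma_finite_lebesgue_on:
  "S \<in> sets lebesgue \<Longrightarrow> sigma_finite_measure (lebesgue_on (S :: 'a::euclidean_space set))"
  by (simp add: sigma_finite_lebesgue sigma_finite_measure_restrict_space)

lemma borel_measurable_weight:
  assumes "weight (\<omega> :: 'a::euclidean_space \<Rightarrow> real)"
  shows "\<omega> \<in> borel_measurable lebesgue"
proof -
  let ?\<omega> = "\<lambda>n::nat. \<lambda>x. if x \<in> cball (0::'a) (real n) then \<omega> x else 0"
  have "?\<omega> n \<in> borel_measurable lebesgue" for n
    using assms unfolding weight_def
    by (intro borel_measurable_if_I) (auto intro: borel_measurable_integrable)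
  moreover have "(\<lambda>n. ?\<omega> n x) \<longlonglongrightarrow> \<omega> x" for x
  proof (rule tendsto_eventually)
    obtain N where "norm x \<le> real N" using real_arch_simple by blast
    then show "\<forall>\<^sub>F n in sequentially. ?\<omega> n x = \<omega> x"
      by (auto simp: eventually_sequentially intro!: exI[of _ N])
  qed
  ultimately show ?thesis by (rule borel_measurable_LIMSEQ_real[rotated])
qed

lemma (in pair_sigma_finite) AE_pair_measure_Times:
  assumes "AE x in M1. P x" and "AE y in M2. Q y"
  shows "AE z in M1 \<Otimes>\<^sub>M M2. P (fst z) \<and> Q (snd z)"
proof -
  obtain N1 where N1: "N1 \<in> null_sets M1" "{x\<in>space M1. \<not> P x} \<subseteq> N1"
    using assms(1) by (auto elim!: AE_E)
  obtain N2 where N2: "N2 \<in> null_sets M2" "{y\<in>space M2. \<not> Q y} \<subseteq> N2"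
    using assms(2) by (auto elim!: AE_E)
  let ?N = "N1 \<times> space M2 \<union> space M1 \<times> N2"
  have "N1 \<times> space M2 \<in> null_sets (M1 \<Otimes>\<^sub>M M2)" "space M1 \<times> N2 \<in> null_sets (M1 \<Otimes>\<^sub>M M2)"
    using N1(1) N2(1) by (auto simp: emeasure_pair_measure_Times)
  then have "?N \<in> null_sets (M1 \<Otimes>\<^sub>M M2)" by blast
  moreover have "{z\<in>space (M1 \<Otimes>\<^sub>M M2). \<not> (P (fst z) \<and> Q (snd z))} \<subseteq> ?N"
    using N1(2) N2(2) by (auto simp: space_pair_measure)
  ultimately show ?thesis by (rule AE_I')
qed

lemma (in pair_sigma_finite) AE_pair_swap:
  assumes "AE z in M1 \<Otimes>\<^sub>M M2. R z"
  shows "AE y in M2. AE x in M1. R (x, y)"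
proof -
  interpret swapped: pair_sigma_finite M2 M1 ..
  have "AE z in distr (M2 \<Otimes>\<^sub>M M1) (M1 \<Otimes>\<^sub>M M2) (\<lambda>(x, y). (y, x)). R z"
    using assms by (subst (asm) distr_pair_swap)
  then have "AE w in M2 \<Otimes>\<^sub>M M1. R (snd w, fst w)"
    by (auto dest: AE_distrD[OF measurable_pair_swap'] simp: case_prod_beta)
  then show ?thesis by (auto dest: swapped.AE_pair)
qed

lemma ennreal_divide_le_mult_divide_iff:
  fixes A B :: ennreal
  assumes "0 < s" and "0 < t" and "0 \<le> a"
  shows "A / ennreal s \<le> ennreal a * (B / ennreal t) \<longleftrightarrow> A \<le> ennreal (a * s / t) * B"
proof -
  have "ennreal s * (A / ennreal s) = A"
    using assms(1) by (metis ennreal_eq_0_iff ennreal_neq_top mult.commute mult_divide_eq_ennreal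
      ennreal_times_divide not_le)
  moreover have "ennreal (a * s / t) = ennreal a * ennreal s / ennreal t"
    using assms by (simp add: divide_ennreal flip: ennreal_mult)
  then have "ennreal s * (ennreal a * (B / ennreal t)) = ennreal (a * s / t) * B"
    by (simp add: ennreal_times_divide ennreal_divide_times mult_ac)
  moreover have "A / ennreal s \<le> ennreal a * (B / ennreal t) \<longleftrightarrow>
      ennreal s * (A / ennreal s) \<le> ennreal s * (ennreal a * (B / ennreal t))"
    using assms(1) by (simp add: ennreal_mult_le_mult_iff)
  ultimately show ?thesis by simp
qed

text \<open>\<open>(aInc)\<^sub>1\<close> for a single function, multiplied out to avoid division in \<^typ>\<open>ennreal\<close>.\<close>

definition aInc1_const :: "real \<Rightarrow> (real \<Rightarrow> ennreal) \<Rightarrow> bool" where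
  "aInc1_const a \<psi> \<longleftrightarrow> (\<forall>s t. 0 < s \<longrightarrow> s < t \<longrightarrow> \<psi> s \<le> ennreal (a * s / t) * \<psi> t)"

definition weak_Phi_with :: "real \<Rightarrow> (real \<Rightarrow> ennreal) \<Rightarrow> bool" where
  "weak_Phi_with a \<psi> \<longleftrightarrow> mono_on {0..} \<psi> \<and> \<psi> 0 = 0 \<and>
     (\<psi> \<longlongrightarrow> 0) (at_right 0) \<and> (\<psi> \<longlongrightarrow> \<infinity>) at_top \<and> aInc1_const a \<psi>"

lemma aInc1_const_iff_divide:
  assumes "0 \<le> a"
  shows "aInc1_const a \<psi> \<longleftrightarrow>
    (\<forall>s t. 0 < s \<and> s < t \<longrightarrow> \<psi> s / ennreal s \<le> ennreal a * (\<psi> t / ennreal t))"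
  using assms by (auto simp: aInc1_const_def ennreal_divide_le_mult_divide_iff)

lemma weak_Phi_const_iff: "weak_Phi_const \<psi> \<longleftrightarrow> (\<exists>a\<ge>1. weak_Phi_with a \<psi>)"
  by (auto simp: weak_Phi_const_def weak_Phi_with_def aInc1_const_iff_divide)

lemma Phi_w_imp_AE_weak_Phi_with:
  assumes "Phi_w \<Omega> \<phi>"
  obtains a where "1 \<le> a" and "AE x in lebesgue_on \<Omega>. weak_Phi_with a (\<phi> x)"
proof -
  obtain a where "1 \<le> a" and aInc: "AE x in lebesgue_on \<Omega>. \<forall>s t. 0 < s \<and> s < t \<longrightarrow>
      \<phi> x s / ennreal (s powr 1) \<le> ennreal a * (\<phi> x t / ennreal (t powr 1))"
    using assms unfolding Phi_w_def aInc_def by blast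
  have "AE x in lebesgue_on \<Omega>. mono_on {0..} (\<phi> x) \<and> \<phi> x 0 = 0 \<and>
      (\<phi> x \<longlongrightarrow> 0) (at_right 0) \<and> (\<phi> x \<longlongrightarrow> \<infinity>) at_top"
    using assms unfolding Phi_w_def Phi_pre_def by blast
  with aInc have "AE x in lebesgue_on \<Omega>. weak_Phi_with a (\<phi> x)"
    by eventually_elim (use \<open>1 \<le> a\<close> in \<open>auto simp: weak_Phi_with_def aInc1_const_iff_divide\<close>)
  with \<open>1 \<le> a\<close> show thesis by (rule that)
qed

lemma weak_Phi_with_ennreal: "weak_Phi_with 1 (\<lambda>t. ennreal t)"
  unfolding weak_Phi_with_def aInc1_const_def
proof (intro conjI allI impI)
  show "mono_on {0..} (\<lambda>t. ennreal t)"
    by (rule mono_onI) (simp add: ennreal_leI)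
  show "((\<lambda>t. ennreal t) \<longlongrightarrow> 0) (at_right 0)"
    using tendsto_ennrealI[OF tendsto_ident_at[of 0 "{0<..}"]] by simp
  show "((\<lambda>t. ennreal t) \<longlongrightarrow> \<infinity>) at_top"
    by (simp add: ennreal_tendsto_top_eq_at_top filterlim_ident)
  fix s t :: real assume "0 < s" "s < t"
  then show "ennreal s \<le> ennreal (1 * s / t) * ennreal t"
    by (simp flip: ennreal_mult)
qed simp

lemma aInc1_const_scale_le:
  assumes "aInc1_const a \<psi>" and "1 \<le> a" and "\<psi> 0 = 0" and "0 < l" "l \<le> 1" and "0 \<le> t"
  shows "\<psi> (l * t) \<le> ennreal (a * l) * \<psi> t"
proof (cases "t = 0 \<or> l = 1")
  case True
  have "1 * \<psi> t \<le> ennreal a * \<psi> t"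
    using \<open>1 \<le> a\<close> by (intro mult_right_mono) auto
  with True show ?thesis using \<open>\<psi> 0 = 0\<close> by auto
next
  case False
  with assms have "0 < l * t" and "l * t < t" by auto
  then have "\<psi> (l * t) \<le> ennreal (a * (l * t) / t) * \<psi> t"
    using assms(1) unfolding aInc1_const_def by blast
  with False show ?thesis by simp
qed

lemma aInc1_const_rescale_le_one:
  assumes "aInc1_const a \<psi>" and "1 \<le> a" and "\<psi> 0 = 0" and "0 < K" and "0 \<le> t"
    and "\<psi> t \<le> ennreal K"
  shows "\<psi> (min 1 (1 / (a * K)) * t) \<le> 1"
proof -
  define l where "l = min 1 (1 / (a * K))"
  have l: "0 < l" "l \<le> 1" "a * l * K \<le> 1"
    using assms by (auto simp: l_def min_def field_simps)
  have "\<psi> (l * t) \<le> ennreal (a * l) * \<psi> t"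
    using assms l by (intro aInc1_const_scale_le) auto
  also have "\<dots> \<le> ennreal (a * l) * ennreal K"
    using assms by (intro mult_left_mono) auto
  also have "\<dots> = ennreal (a * l * K)"
    using assms l by (simp add: ennreal_mult)
  also have "\<dots> \<le> 1"
    using l by simp
  finally show ?thesis by (simp add: l_def)
qed

lemma aInc1_const_tendsto_0:
  assumes "aInc1_const a \<psi>" and "0 \<le> a" and "0 < t\<^sub>1" and "\<psi> t\<^sub>1 \<noteq> \<infinity>"
  shows "(\<psi> \<longlongrightarrow> 0) (at_right 0)"
proof -
  obtain b where b: "\<psi> t\<^sub>1 = ennreal b" "0 \<le> b"
    using assms(4) by (cases "\<psi> t\<^sub>1") auto
  let ?g = "\<lambda>s. ennreal (a * s / t\<^sub>1) * ennreal b"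
  have above: "\<forall>\<^sub>F s in at_right 0. \<psi> s \<le> ?g s"
    unfolding eventually_at_right_field
    using assms(1,3) unfolding aInc1_const_def b(1)[symmetric] by (intro exI[of _ t\<^sub>1]) auto
  have "(?g \<longlongrightarrow> ennreal (a * 0 / t\<^sub>1) * ennreal b) (at_right 0)"
    using assms(3) by (intro tendsto_intros) auto
  then have "(?g \<longlongrightarrow> 0) (at_right 0)"
    by simp
  then show ?thesis
    by (intro tendsto_sandwich[OF _ above tendsto_const]) simp_all
qed

lemma aInc1_const_tendsto_top:
  assumes "aInc1_const a \<psi>" and "0 < a" and "0 < t\<^sub>0" and "0 < \<psi> t\<^sub>0"
  shows "(\<psi> \<longlongrightarrow> \<infinity>) at_top"
proof -
  let ?g = "\<lambda>t. ennreal (t / (a * t\<^sub>0)) * \<psi> t\<^sub>0"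
  have below: "\<forall>\<^sub>F t in at_top. ?g t \<le> \<psi> t"
    unfolding eventually_at_top_dense
  proof (intro exI[of _ t\<^sub>0] allI impI)
    fix t assume "t\<^sub>0 < t"
    then have "\<psi> t\<^sub>0 \<le> ennreal (a * t\<^sub>0 / t) * \<psi> t"
      using assms unfolding aInc1_const_def by blast
    then have "?g t \<le> ennreal (t / (a * t\<^sub>0)) * ennreal (a * t\<^sub>0 / t) * \<psi> t"
      by (simp add: mult.assoc mult_left_mono)
    also have "ennreal (t / (a * t\<^sub>0)) * ennreal (a * t\<^sub>0 / t) = 1"
      using assms \<open>t\<^sub>0 < t\<close> by (simp flip: ennreal_mult)
    finally show "?g t \<le> \<psi> t" by simp
  qed
  have "filterlim (\<lambda>t. t / (a * t\<^sub>0)) at_top at_top"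
    using assms unfolding divide_inverse
    by (intro filterlim_at_top_mult_tendsto_pos[OF tendsto_const] filterlim_ident) auto
  then have "((\<lambda>t. ennreal (t / (a * t\<^sub>0))) \<longlongrightarrow> \<infinity>) at_top"
    by (simp add: ennreal_tendsto_top_eq_at_top)
  then have "(?g \<longlongrightarrow> \<infinity> * \<psi> t\<^sub>0) at_top"
    using assms by (intro tendsto_mult_ennreal tendsto_const) auto
  moreover have "\<psi> t\<^sub>0 \<noteq> 0"
    using assms(4) by auto
  ultimately have "(?g \<longlongrightarrow> \<infinity>) at_top"
    by (simp add: ennreal_top_mult)
  then show ?thesis
    by (rule tendsto_sandwich[OF below _ _ tendsto_const, rotated]) simp
qed

lemma aInc1_const_liminf:
  assumes "\<And>n. aInc1_const a (f n)"
  shows "aInc1_const a (\<lambda>t. liminf (\<lambda>n. f n t))"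
  unfolding aInc1_const_def
proof (intro allI impI)
  fix s t :: real assume "0 < s" "s < t"
  then have "liminf (\<lambda>n. f n s) \<le> liminf (\<lambda>n. ennreal (a * s / t) * f n t)"
    using assms unfolding aInc1_const_def by (intro Liminf_mono) auto
  also have "\<dots> = ennreal (a * s / t) * liminf (\<lambda>n. f n t)"
    by (intro Liminf_compose_continuous_mono monoI mult_left_mono
        ennreal_continuous_on_cmult[OF _ continuous_on_id]) auto
  finally show "liminf (\<lambda>n. f n s) \<le> ennreal (a * s / t) * liminf (\<lambda>n. f n t)" .
qed

lemma liminf_le_plus_limit:
  fixes u g :: "nat \<Rightarrow> ennreal"
  assumes "\<And>n. u n \<le> w + g n" and "g \<longlonglongrightarrow> c"
  shows "liminf u \<le> w + c"
proof -
  have "liminf u \<le> liminf (\<lambda>n. w + g n)"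
    using assms(1) by (intro Liminf_mono) auto
  also have "\<dots> = w + c"
    using assms(2) by (intro lim_imp_Liminf tendsto_add tendsto_const) auto
  finally show ?thesis .
qed

lemma le_liminf_plus_limit:
  fixes u g :: "nat \<Rightarrow> ennreal"
  assumes "liminf u < S" and "\<And>n. u n \<le> S \<Longrightarrow> w \<le> u n + g n" and "g \<longlonglongrightarrow> c"
  shows "w \<le> liminf u + c"
proof (rule ennreal_le_epsilon)
  fix e :: real assume "liminf u + c < top" and "0 < e"
  then have "liminf u < liminf u + ennreal (e / 2)" and "c < c + ennreal (e / 2)"
    by (auto simp: ennreal_add_left_cancel_less[of _ 0, simplified])
  then obtain y where "liminf u < y" and y: "y < S" "y < liminf u + ennreal (e / 2)"
    using assms(1) by (metis dense min_less_iff_conj)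
  then have "\<not> (\<forall>z<y. \<forall>\<^sub>F n in sequentially. z < u n)"
    by (simp add: le_Liminf_iff[symmetric] not_le)
  then obtain z where "z < y" and frequently: "\<exists>\<^sub>F n in sequentially. u n \<le> z"
    by (auto simp: not_eventually not_less)
  have "\<forall>\<^sub>F n in sequentially. g n < c + ennreal (e / 2)"
    using assms(3) \<open>c < c + ennreal (e / 2)\<close> by (rule order_tendstoD)
  from frequently_eventually_frequently[OF frequently this]
  obtain n where "u n \<le> z" and gn: "g n < c + ennreal (e / 2)"
    by (auto dest: frequently_ex)
  with \<open>z < y\<close> y have un: "u n \<le> S" "u n \<le> liminf u + ennreal (e / 2)"
    by auto
  have "w \<le> u n + g n"
    using assms(2) un(1) .
  also have "\<dots> \<le> (liminf u + ennreal (e / 2)) + (c + ennreal (e / 2))"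
    using un(2) gn by (intro add_mono) auto
  also have "\<dots> = liminf u + c + ennreal e"
    using \<open>0 < e\<close> by (simp add: add_ac flip: ennreal_plus)
  finally show "w \<le> liminf u + c + ennreal e" .
qed

text \<open>
  \<open>(A2)\<^sub>\<omega>\<close> asks for \<open>dominated_on_sublevel s \<beta> (\<phi> x) (\<phi> y) (h x + h y)\<close> at every level
  \<open>s\<close>; the comparison in the theorem is this relation at level 1 in both directions between
  \<open>\<phi> x\<close> and \<open>\<phi>\<^sub>\<infinity>\<close>.
\<close>

definition dominated_on_sublevel ::
    "real \<Rightarrow> real \<Rightarrow> (real \<Rightarrow> ennreal) \<Rightarrow> (real \<Rightarrow> ennreal) \<Rightarrow> real \<Rightarrow> bool" where
  "dominated_on_sublevel s \<beta> \<phi> \<psi> K \<longleftrightarrow> (\<forall>t\<ge>0. \<psi> t \<le> ennreal s \<longrightarrow> \<phi> (\<beta> * t) \<le> \<psi> t + ennreal K)"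

lemma A2w_iff_dominated_on_sublevel:
  "A2w \<Omega> \<omega> \<phi> \<longleftrightarrow> (\<forall>s>0. \<exists>\<beta> h. 0 < \<beta> \<and> \<beta> \<le> 1 \<and> L1w_Linf \<Omega> \<omega> h \<and> (\<forall>x. 0 \<le> h x) \<and>
     (AE z in lebesgue_on \<Omega> \<Otimes>\<^sub>M lebesgue_on \<Omega>.
        dominated_on_sublevel s \<beta> (\<phi> (fst z)) (\<phi> (snd z)) (h (fst z) + h (snd z))))"
  unfolding A2w_def dominated_on_sublevel_def
  by (auto simp: ennreal_plus add.assoc cong: conj_cong)

lemma dominated_on_sublevel_mono:
  assumes "dominated_on_sublevel s \<beta> \<phi> \<psi> K" and "r \<le> s"
  shows "dominated_on_sublevel r \<beta> \<phi> \<psi> K"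
  using assms unfolding dominated_on_sublevel_def by (blast intro: order_trans[OF _ ennreal_leI])

lemma dominated_on_sublevel_liminf_left:
  assumes "\<And>n. dominated_on_sublevel s \<beta> (f n) \<phi> (K n)" and "K \<longlonglongrightarrow> k"
  shows "dominated_on_sublevel s \<beta> (\<lambda>t. liminf (\<lambda>n. f n t)) \<phi> k"
  using assms unfolding dominated_on_sublevel_def
  by (auto intro!: liminf_le_plus_limit)

lemma dominated_on_sublevel_liminf_right:
  assumes "\<And>n. dominated_on_sublevel s \<beta> \<phi> (f n) (K n)" and "K \<longlonglongrightarrow> k"
    and "0 \<le> r" and "r < s"
  shows "dominated_on_sublevel r \<beta> \<phi> (\<lambda>t. liminf (\<lambda>n. f n t)) k"
  unfolding dominated_on_sublevel_def
proof (intro allI impI)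
  fix t :: real assume "0 \<le> t" and "liminf (\<lambda>n. f n t) \<le> ennreal r"
  with assms(3,4) have "liminf (\<lambda>n. f n t) < ennreal s"
    by (auto simp: ennreal_less_iff intro: le_less_trans)
  then show "\<phi> (\<beta> * t) \<le> liminf (\<lambda>n. f n t) + ennreal k"
    using assms(1,2) \<open>0 \<le> t\<close> unfolding dominated_on_sublevel_def
    by (intro le_liminf_plus_limit) auto
qed

lemma dominated_on_sublevel_liminf:
  assumes "\<And>n. dominated_on_sublevel s \<beta> \<phi> (f n) (K + k n)"
    and "\<And>n. dominated_on_sublevel s \<beta> (f n) \<phi> (k n + K)"
    and "k \<longlonglongrightarrow> c" and "0 \<le> r" and "r < s"
  shows "dominated_on_sublevel r \<beta> \<phi> (\<lambda>t. liminf (\<lambda>n. f n t)) (K + c)"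
    and "dominated_on_sublevel r \<beta> (\<lambda>t. liminf (\<lambda>n. f n t)) \<phi> (K + c)"
proof -
  have lim: "(\<lambda>n. K + k n) \<longlonglongrightarrow> K + c"
    by (rule tendsto_add[OF tendsto_const assms(3)])
  show "dominated_on_sublevel r \<beta> \<phi> (\<lambda>t. liminf (\<lambda>n. f n t)) (K + c)"
    by (rule dominated_on_sublevel_liminf_right[of s \<beta> \<phi> f "\<lambda>n. K + k n", OF assms(1) lim assms(4,5)])
  have "dominated_on_sublevel r \<beta> (f n) \<phi> (K + k n)" for n
    using dominated_on_sublevel_mono[OF assms(2)[of n]] \<open>r < s\<close> by (simp add: add.commute)
  then show "dominated_on_sublevel r \<beta> (\<lambda>t. liminf (\<lambda>n. f n t)) \<phi> (K + c)"
    using lim by (rule dominated_on_sublevel_liminf_left)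
qed

lemma weak_Phi_with_if_dominated:
  assumes "(\<phi> \<longlongrightarrow> 0) (at_right 0)" and "(\<phi> \<longlongrightarrow> \<infinity>) at_top"
    and "mono_on {0..} \<psi>" and "\<psi> 0 = 0" and "aInc1_const a \<psi>" and "1 \<le> a"
    and \<phi>\<psi>: "dominated_on_sublevel 1 \<beta> \<phi> \<psi> C" and \<psi>\<phi>: "dominated_on_sublevel 1 \<beta> \<psi> \<phi> C"
    and "0 < \<beta>" and "0 \<le> C"
  shows "weak_Phi_with a \<psi>"
proof -
  have "\<forall>\<^sub>F t in at_right 0. 0 < t \<and> \<phi> t < 1"
    using eventually_at_right_less[of 0] order_tendstoD(2)[OF assms(1) zero_less_one]
    by eventually_elim auto
  then obtain t where t: "0 < t" "\<phi> t < 1"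
    using eventually_happens'[OF trivial_limit_at_right_real] by blast
  then have "\<psi> (\<beta> * t) \<le> \<phi> t + ennreal C"
    using \<psi>\<phi> unfolding dominated_on_sublevel_def by simp
  also have "\<dots> < \<infinity>"
    using less_trans[OF t(2) ennreal_one_less_top] by simp
  finally have lim0: "(\<psi> \<longlongrightarrow> 0) (at_right 0)"
    using assms t by (intro aInc1_const_tendsto_0[of a _ "\<beta> * t"]) auto
  obtain N where N: "\<And>u. N \<le> u \<Longrightarrow> ennreal (1 + C) < \<phi> u"
    using order_tendstoD(1)[OF assms(2), of "ennreal (1 + C)"]
    by (auto simp: eventually_at_top_linorder)
  define t where "t = max N 1 / \<beta>"
  have t: "0 < t" "\<beta> * t = max N 1"
    using \<open>0 < \<beta>\<close> by (auto simp: t_def)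
  have "1 < \<psi> t"
  proof (rule ccontr)
    assume "\<not> 1 < \<psi> t"
    then have "\<psi> t \<le> 1"
      by simp
    then have "\<phi> (\<beta> * t) \<le> \<psi> t + ennreal C"
      using \<phi>\<psi> \<open>0 < t\<close> unfolding dominated_on_sublevel_def by simp
    also have "\<dots> \<le> 1 + ennreal C"
      using \<open>\<psi> t \<le> 1\<close> by (rule add_right_mono)
    also have "\<dots> = ennreal (1 + C)"
      using \<open>0 \<le> C\<close> by (simp add: ennreal_plus)
    finally show False
      using N[of "\<beta> * t"] t by simp
  qed
  then have "(\<psi> \<longlongrightarrow> \<infinity>) at_top"
    using assms t less_trans[OF zero_less_one] by (intro aInc1_const_tendsto_top[of a _ t]) auto
  with lim0 assms show ?thesis
    by (simp add: weak_Phi_with_def)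
qed

lemma weak_Phi_with_liminf:
  assumes "\<And>n. weak_Phi_with a (f n)" and "1 \<le> a" and "weak_Phi_with a' \<phi>"
    and "dominated_on_sublevel 1 \<beta> \<phi> (\<lambda>t. liminf (\<lambda>n. f n t)) C"
    and "dominated_on_sublevel 1 \<beta> (\<lambda>t. liminf (\<lambda>n. f n t)) \<phi> C"
    and "0 < \<beta>" and "0 \<le> C"
  shows "weak_Phi_with a (\<lambda>t. liminf (\<lambda>n. f n t))"
proof (rule weak_Phi_with_if_dominated)
  show "mono_on {0..} (\<lambda>t. liminf (\<lambda>n. f n t))"
    using assms(1) unfolding weak_Phi_with_def
    by (intro mono_onI Liminf_mono always_eventually) (simp add: mono_on_def)
  show "liminf (\<lambda>n. f n 0) = 0" and "aInc1_const a (\<lambda>t. liminf (\<lambda>n. f n t))"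
    using assms(1) by (auto simp: weak_Phi_with_def Liminf_const intro: aInc1_const_liminf)
qed (use assms in \<open>auto simp: weak_Phi_with_def\<close>)

lemma dominated_on_sublevel_trans:
  assumes "mono_on {0..} \<phi>\<^sub>y" and "\<phi>\<^sub>y 0 = 0" and "aInc1_const a \<phi>\<^sub>y" and "1 \<le> a"
    and "mono_on {0..} \<psi>" and "\<psi> 0 = 0" and "aInc1_const b \<psi>" and "1 \<le> b"
    and x\<psi>: "dominated_on_sublevel 1 \<beta> \<phi>\<^sub>x \<psi> K\<^sub>x" and \<psi>y: "dominated_on_sublevel 1 \<beta> \<psi> \<phi>\<^sub>y K\<^sub>y"
    and "0 \<le> K\<^sub>x" and "0 \<le> K\<^sub>y" and "K\<^sub>y \<le> M" and "0 < \<beta>" and "0 < s"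
  shows "dominated_on_sublevel s (\<beta> * min 1 (1 / (b * (1 + M))) * \<beta> * min 1 (1 / (a * s)))
    \<phi>\<^sub>x \<phi>\<^sub>y (K\<^sub>x + K\<^sub>y)"
  unfolding dominated_on_sublevel_def
proof (intro allI impI)
  fix t :: real assume "0 \<le> t" and "\<phi>\<^sub>y t \<le> ennreal s"
  define l where "l = min 1 (1 / (a * s))"
  define \<mu> where "\<mu> = min 1 (1 / (b * (1 + M)))"
  have l: "0 < l" "l \<le> 1" and \<mu>: "0 < \<mu>" "\<mu> \<le> 1"
    using assms by (auto simp: l_def \<mu>_def)
  have t: "0 \<le> l * t" "0 \<le> \<beta> * (l * t)"
    using l \<open>0 \<le> t\<close> \<open>0 < \<beta>\<close> by auto
  have y_le_1: "\<phi>\<^sub>y (l * t) \<le> 1"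
    unfolding l_def using assms \<open>0 \<le> t\<close> \<open>\<phi>\<^sub>y t \<le> ennreal s\<close>
    by (intro aInc1_const_rescale_le_one) auto
  then have \<psi>_y: "\<psi> (\<beta> * (l * t)) \<le> \<phi>\<^sub>y (l * t) + ennreal K\<^sub>y"
    using \<psi>y t unfolding dominated_on_sublevel_def by simp
  also have "\<dots> \<le> ennreal (1 + M)"
    using y_le_1 assms by (auto simp: ennreal_plus intro!: add_mono)
  finally have "\<psi> (\<mu> * (\<beta> * (l * t))) \<le> 1"
    unfolding \<mu>_def using assms t
    by (intro aInc1_const_rescale_le_one) (auto simp: add_nonneg_pos)
  then have "\<phi>\<^sub>x (\<beta> * (\<mu> * (\<beta> * (l * t)))) \<le> \<psi> (\<mu> * (\<beta> * (l * t))) + ennreal K\<^sub>x"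
    using x\<psi> \<mu> t unfolding dominated_on_sublevel_def by simp
  also have "\<dots> \<le> \<psi> (\<beta> * (l * t)) + ennreal K\<^sub>x"
    using \<mu> t by (intro add_right_mono mono_onD[OF \<open>mono_on {0..} \<psi>\<close>])
      (auto intro: mult_left_le_one_le)
  also have "\<dots> \<le> \<phi>\<^sub>y (l * t) + ennreal K\<^sub>y + ennreal K\<^sub>x"
    using \<psi>_y by (rule add_right_mono)
  also have "\<dots> \<le> \<phi>\<^sub>y t + ennreal K\<^sub>y + ennreal K\<^sub>x"
    using l \<open>0 \<le> t\<close> by (intro add_right_mono mono_onD[OF \<open>mono_on {0..} \<phi>\<^sub>y\<close>])
      (auto intro: mult_left_le_one_le)
  also have "\<dots> = \<phi>\<^sub>y t + ennreal (K\<^sub>x + K\<^sub>y)"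
    using assms by (simp add: ennreal_plus add_ac)
  finally show "\<phi>\<^sub>x (\<beta> * min 1 (1 / (b * (1 + M))) * \<beta> * min 1 (1 / (a * s)) * t)
      \<le> \<phi>\<^sub>y t + ennreal (K\<^sub>x + K\<^sub>y)"
    by (simp add: l_def \<mu>_def mult_ac)
qed

lemma obtain_minimizing_sequence:
  fixes h :: "'b \<Rightarrow> real"
  assumes "S \<noteq> {}" and "bdd_below (h ` S)"
  obtains y where "\<And>n. y n \<in> S" and "(\<lambda>n. h (y n)) \<longlonglongrightarrow> Inf (h ` S)"
proof -
  have "Inf (h ` S) \<in> closure (h ` S)"
    using assms by (intro closure_contains_Inf) auto
  then obtain v where v: "\<And>n. v n \<in> h ` S" and "v \<longlonglongrightarrow> Inf (h ` S)"
    by (auto simp: closure_sequential)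
  have "\<exists>y. \<forall>n. y n \<in> S \<and> v n = h (y n)"
    using v by (intro choice) blast
  then obtain y where y: "\<forall>n. y n \<in> S \<and> v n = h (y n)"
    by blast
  then have "v = (\<lambda>n. h (y n))"
    by auto
  with y \<open>v \<longlonglongrightarrow> Inf (h ` S)\<close> show thesis
    using that by auto
qed

lemma L1w_Linf_add_const:
  assumes "L1w_Linf \<Omega> \<omega> h" and "\<omega> \<in> borel_measurable (lebesgue_on \<Omega>)" and "\<forall>x. 0 \<le> \<omega> x"
    and "0 \<le> c" and "AE x in lebesgue_on \<Omega>. c \<le> h x"
  shows "L1w_Linf \<Omega> \<omega> (\<lambda>x. h x + c)"
proof -
  let ?L = "lebesgue_on \<Omega>"
  obtain M where h: "h \<in> borel_measurable ?L" "(\<integral>\<^sup>+ x. ennreal (\<bar>h x\<bar> * \<omega> x) \<partial>?L) < \<infinity>"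
    "AE x in ?L. \<bar>h x\<bar> \<le> M"
    using assms(1) unfolding L1w_Linf_def by blast
  have "(\<integral>\<^sup>+ x. ennreal (\<bar>h x + c\<bar> * \<omega> x) \<partial>?L) \<le> (\<integral>\<^sup>+ x. 2 * ennreal (\<bar>h x\<bar> * \<omega> x) \<partial>?L)"
    using assms(5)
  proof (intro nn_integral_mono_AE, eventually_elim)
    case (elim x)
    then have "\<bar>h x + c\<bar> * \<omega> x \<le> 2 * (\<bar>h x\<bar> * \<omega> x)"
      using assms(3,4) by (intro mult_right_mono[where b = "2 * \<bar>h x\<bar>", simplified mult.assoc]) auto
    then have "ennreal (\<bar>h x + c\<bar> * \<omega> x) \<le> ennreal (2 * (\<bar>h x\<bar> * \<omega> x))"
      by (rule ennreal_leI)
    also have "\<dots> = 2 * ennreal (\<bar>h x\<bar> * \<omega> x)"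
      using assms(3) by (subst ennreal_mult) auto
    finally show ?case .
  qed
  also have "\<dots> = 2 * (\<integral>\<^sup>+ x. ennreal (\<bar>h x\<bar> * \<omega> x) \<partial>?L)"
    using h(1) assms(2) by (intro nn_integral_cmult) measurable
  also have "\<dots> < \<infinity>"
    using h(2) by (simp add: ennreal_mult_less_top)
  finally show ?thesis
    unfolding L1w_Linf_def using h(1,3) assms(4,5)
    by (intro conjI exI[of _ "M + c"] borel_measurable_add borel_measurable_const)
      (auto elim!: eventually_mono)
qed

lemma liminf_comparison_function:
  fixes M :: "'b measure" and \<phi> :: "'b \<Rightarrow> real \<Rightarrow> ennreal" and h :: "'b \<Rightarrow> real"
  assumes "emeasure M (space M) \<noteq> 0" and "\<forall>x. 0 \<le> h x" and "1 \<le> a" and "0 < \<beta>" and "1 < s"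
    and "AE y in M. weak_Phi_with a (\<phi> y) \<and>
      (AE x in M. dominated_on_sublevel s \<beta> (\<phi> x) (\<phi> y) (h x + h y)) \<and>
      (AE x in M. dominated_on_sublevel s \<beta> (\<phi> y) (\<phi> x) (h y + h x))"
  obtains \<psi> c where "weak_Phi_with a \<psi>" and "0 \<le> c"
    and "AE x in M. c \<le> h x \<and>
      dominated_on_sublevel 1 \<beta> (\<phi> x) \<psi> (h x + c) \<and> dominated_on_sublevel 1 \<beta> \<psi> (\<phi> x) (h x + c)"
proof -
  have AE_witness: "\<exists>x. P x" if "AE x in M. P x" for P
    using eventually_happens'[OF _ that] assms(1) by (simp add: ae_filter_eq_bot_iff)
  define R where "R x y \<longleftrightarrow> dominated_on_sublevel s \<beta> (\<phi> x) (\<phi> y) (h x + h y)" for x y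
  define S where "S = {y \<in> space M. weak_Phi_with a (\<phi> y) \<and> (AE x in M. R x y) \<and> (AE x in M. R y x)}"
  have AE_S: "AE y in M. y \<in> S"
    using AE_space assms(6) by eventually_elim (auto simp: S_def R_def)
  define c where "c = Inf (h ` S)"
  have "S \<noteq> {}"
    using AE_witness[OF AE_S] by blast
  moreover have "bdd_below (h ` S)"
    using assms(2) by (auto intro: bdd_belowI[of _ 0])
  ultimately obtain y where y: "\<And>n. y n \<in> S" and lim: "(\<lambda>n. h (y n)) \<longlonglongrightarrow> c"
    unfolding c_def by (rule obtain_minimizing_sequence) blast
  have c: "0 \<le> c" "\<And>x. x \<in> S \<Longrightarrow> c \<le> h x"
    using \<open>S \<noteq> {}\<close> \<open>bdd_below (h ` S)\<close> assms(2) unfolding c_def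
    by (auto intro: cInf_greatest cInf_lower)
  define \<psi> where "\<psi> = (\<lambda>t. liminf (\<lambda>n. \<phi> (y n) t))"
  have "AE x in M. \<forall>n. R x (y n) \<and> R (y n) x"
    using y by (subst AE_all_countable) (auto simp: S_def)
  with AE_S have AE_good: "AE x in M. x \<in> S \<and>
      dominated_on_sublevel 1 \<beta> (\<phi> x) \<psi> (h x + c) \<and> dominated_on_sublevel 1 \<beta> \<psi> (\<phi> x) (h x + c)"
    unfolding \<psi>_def R_def
    by eventually_elim (use \<open>1 < s\<close> in \<open>auto intro: dominated_on_sublevel_liminf[OF _ _ lim]\<close>)
  then obtain x\<^sub>0 where "x\<^sub>0 \<in> S" "dominated_on_sublevel 1 \<beta> (\<phi> x\<^sub>0) \<psi> (h x\<^sub>0 + c)"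
    "dominated_on_sublevel 1 \<beta> \<psi> (\<phi> x\<^sub>0) (h x\<^sub>0 + c)"
    using AE_witness by blast
  then have "weak_Phi_with a \<psi>"
    unfolding \<psi>_def using y assms(2-4) c(1)
    by (intro weak_Phi_with_liminf[of a _ a "\<phi> x\<^sub>0" \<beta> "h x\<^sub>0 + c"]) (auto simp: S_def \<psi>_def)
  moreover have "AE x in M. c \<le> h x \<and>
      dominated_on_sublevel 1 \<beta> (\<phi> x) \<psi> (h x + c) \<and> dominated_on_sublevel 1 \<beta> \<psi> (\<phi> x) (h x + c)"
    using AE_good by eventually_elim (auto intro: c(2))
  ultimately show thesis
    using c(1) that by blast
qed

lemma A2w_imp_dominated_weak_Phi:
  fixes \<phi> :: "'a::euclidean_space \<Rightarrow> real \<Rightarrow> ennreal"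
  assumes "sigma_finite_measure (lebesgue_on \<Omega>)"
    and "\<omega> \<in> borel_measurable (lebesgue_on \<Omega>)" and "\<forall>x. 0 \<le> \<omega> x"
    and \<phi>: "AE x in lebesgue_on \<Omega>. weak_Phi_with a (\<phi> x)" and "1 \<le> a"
    and "A2w \<Omega> \<omega> \<phi>"
  shows "\<exists>\<psi> h \<beta>. weak_Phi_const \<psi> \<and> L1w_Linf \<Omega> \<omega> h \<and> (\<forall>x. 0 \<le> h x) \<and> 0 < \<beta> \<and> \<beta> \<le> 1 \<and>
    (AE x in lebesgue_on \<Omega>.
      dominated_on_sublevel 1 \<beta> (\<phi> x) \<psi> (h x) \<and> dominated_on_sublevel 1 \<beta> \<psi> (\<phi> x) (h x))"
proof (cases "emeasure (lebesgue_on \<Omega>) (space (lebesgue_on \<Omega>)) = 0")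
  case True
  then have "AE x in lebesgue_on \<Omega>. P x" for P
    by (intro AE_I[of _ _ "space (lebesgue_on \<Omega>)"]) auto
  moreover have "L1w_Linf \<Omega> \<omega> (\<lambda>x. 0)"
    unfolding L1w_Linf_def by (auto intro!: exI[of _ 0])
  moreover have "weak_Phi_const (\<lambda>t. ennreal t)"
    using weak_Phi_with_ennreal by (auto simp: weak_Phi_const_iff)
  ultimately show ?thesis
    by (intro exI[of _ "\<lambda>t. ennreal t"] exI[of _ "\<lambda>x. 0"] exI[of _ 1]) auto
next
  case False
  let ?L = "lebesgue_on \<Omega>"
  interpret pair_sigma_finite ?L ?L
    using assms(1) by (simp add: pair_sigma_finite_def)
  obtain \<beta> h where \<beta>: "0 < \<beta>" "\<beta> \<le> 1" and h: "L1w_Linf \<Omega> \<omega> h" "\<forall>x. 0 \<le> h x"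
    and A2: "AE z in ?L \<Otimes>\<^sub>M ?L.
      dominated_on_sublevel 2 \<beta> (\<phi> (fst z)) (\<phi> (snd z)) (h (fst z) + h (snd z))"
    using \<open>A2w \<Omega> \<omega> \<phi>\<close> unfolding A2w_iff_dominated_on_sublevel by (meson zero_less_numeral)
  have "AE y in ?L. weak_Phi_with a (\<phi> y) \<and>
      (AE x in ?L. dominated_on_sublevel 2 \<beta> (\<phi> x) (\<phi> y) (h x + h y)) \<and>
      (AE x in ?L. dominated_on_sublevel 2 \<beta> (\<phi> y) (\<phi> x) (h y + h x))"
    using \<phi> AE_pair_swap[OF A2] AE_pair[OF A2] by eventually_elim simp
  then obtain \<psi> c where \<psi>: "weak_Phi_with a \<psi>" and "0 \<le> c"
    and AE_c: "AE x in ?L. c \<le> h x \<and>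
      dominated_on_sublevel 1 \<beta> (\<phi> x) \<psi> (h x + c) \<and> dominated_on_sublevel 1 \<beta> \<psi> (\<phi> x) (h x + c)"
    using liminf_comparison_function[OF False h(2) \<open>1 \<le> a\<close> \<beta>(1), of 2] by auto
  have "L1w_Linf \<Omega> \<omega> (\<lambda>x. h x + c)"
    using AE_c by (intro L1w_Linf_add_const h(1) assms(2,3) \<open>0 \<le> c\<close>) (auto elim!: eventually_mono)
  then show ?thesis
    using \<psi> \<beta> h(2) \<open>0 \<le> c\<close> \<open>1 \<le> a\<close> AE_c
    by (intro exI[of _ \<psi>] exI[of _ "\<lambda>x. h x + c"] exI[of _ \<beta>])
      (auto simp: weak_Phi_const_iff elim!: eventually_mono)
qed

lemma dominated_weak_Phi_imp_A2w:
  fixes \<phi> :: "'a::euclidean_space \<Rightarrow> real \<Rightarrow> ennreal"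
  assumes "sigma_finite_measure (lebesgue_on \<Omega>)"
    and \<phi>: "AE x in lebesgue_on \<Omega>. weak_Phi_with a (\<phi> x)" and "1 \<le> a"
    and "weak_Phi_const \<psi>" and h: "L1w_Linf \<Omega> \<omega> h" "\<forall>x. 0 \<le> h x" and "0 < \<beta>" "\<beta> \<le> 1"
    and dominated: "AE x in lebesgue_on \<Omega>.
      dominated_on_sublevel 1 \<beta> (\<phi> x) \<psi> (h x) \<and> dominated_on_sublevel 1 \<beta> \<psi> (\<phi> x) (h x)"
  shows "A2w \<Omega> \<omega> \<phi>"
  unfolding A2w_iff_dominated_on_sublevel
proof (intro allI impI)
  fix s :: real assume "0 < s"
  let ?L = "lebesgue_on \<Omega>"
  interpret pair_sigma_finite ?L ?L
    using assms(1) by (simp add: pair_sigma_finite_def)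
  obtain b where "1 \<le> b" and \<psi>: "weak_Phi_with b \<psi>"
    using \<open>weak_Phi_const \<psi>\<close> by (auto simp: weak_Phi_const_iff)
  obtain M where "AE x in ?L. \<bar>h x\<bar> \<le> M"
    using h(1) unfolding L1w_Linf_def by blast
  then have M: "AE x in ?L. h x \<le> max M 0"
    by eventually_elim auto
  define \<beta>\<^sub>2 where "\<beta>\<^sub>2 = \<beta> * min 1 (1 / (b * (1 + max M 0))) * \<beta> * min 1 (1 / (a * s))"
  have \<beta>\<^sub>2: "0 < \<beta>\<^sub>2" "\<beta>\<^sub>2 \<le> 1"
    using \<open>0 < \<beta>\<close> \<open>\<beta> \<le> 1\<close> \<open>1 \<le> a\<close> \<open>1 \<le> b\<close> \<open>0 < s\<close>
    by (auto simp: \<beta>\<^sub>2_def intro!: mult_le_one)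
  have through_\<psi>: "dominated_on_sublevel s \<beta>\<^sub>2 (\<phi> x) (\<phi> y) (h x + h y)"
    if "dominated_on_sublevel 1 \<beta> (\<phi> x) \<psi> (h x)" and "dominated_on_sublevel 1 \<beta> \<psi> (\<phi> y) (h y)"
      and "weak_Phi_with a (\<phi> y)" and "h y \<le> max M 0" for x y
    using that \<psi> h(2) \<open>1 \<le> a\<close> \<open>1 \<le> b\<close> \<open>0 < \<beta>\<close> \<open>0 < s\<close> unfolding \<beta>\<^sub>2_def weak_Phi_with_def
    by (intro dominated_on_sublevel_trans[of "\<phi> y" a \<psi> b \<beta> "\<phi> x" "h x" "h y"]) auto
  have "AE z in ?L \<Otimes>\<^sub>M ?L.
      dominated_on_sublevel s \<beta>\<^sub>2 (\<phi> (fst z)) (\<phi> (snd z)) (h (fst z) + h (snd z))"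
    using AE_pair_measure_Times[OF dominated eventually_conj[OF dominated eventually_conj[OF \<phi> M]]]
    by (rule eventually_mono) (auto intro: through_\<psi>)
  then show "\<exists>\<beta> h. 0 < \<beta> \<and> \<beta> \<le> 1 \<and> L1w_Linf \<Omega> \<omega> h \<and> (\<forall>x. 0 \<le> h x) \<and>
      (AE z in ?L \<Otimes>\<^sub>M ?L. dominated_on_sublevel s \<beta> (\<phi> (fst z)) (\<phi> (snd z)) (h (fst z) + h (snd z)))"
    using \<beta>\<^sub>2 h by blast
qed

theorem lemma2p4:
  fixes \<Omega> :: "'a::euclidean_space set" and \<omega> :: "'a \<Rightarrow> real"
    and \<phi> :: "'a \<Rightarrow> real \<Rightarrow> ennreal"
  assumes "open \<Omega>" and "weight \<omega>" and "Phi_w \<Omega> \<phi>"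
  shows "A2w \<Omega> \<omega> \<phi> \<longleftrightarrow>
    (\<exists>\<phi>inf h \<beta>. weak_Phi_const \<phi>inf \<and> L1w_Linf \<Omega> \<omega> h \<and> (\<forall>x. 0 \<le> h x) \<and>
       0 < \<beta> \<and> \<beta> \<le> 1 \<and>
       (AE x in lebesgue_on \<Omega>. \<forall>t\<ge>0.
          (\<phi>inf t \<le> 1 \<longrightarrow> \<phi> x (\<beta> * t) \<le> \<phi>inf t + ennreal (h x)) \<and>
          (\<phi> x t \<le> 1 \<longrightarrow> \<phi>inf (\<beta> * t) \<le> \<phi> x t + ennreal (h x))))"
proof -
  let ?L = "lebesgue_on \<Omega>"
  have sf: "sigma_finite_measure ?L"
    using assms(1) by (intro sigma_finite_lebesgue_on) (simp add: borel_open)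
  have \<omega>: "\<omega> \<in> borel_measurable ?L" "\<forall>x. 0 \<le> \<omega> x"
    using measurable_restrict_space1[OF borel_measurable_weight[OF assms(2)]] assms(2)
    by (auto simp: weight_def)
  obtain a where "1 \<le> a" and \<phi>: "AE x in ?L. weak_Phi_with a (\<phi> x)"
    using Phi_w_imp_AE_weak_Phi_with[OF assms(3)] .
  have two_sided: "(\<forall>t\<ge>0. (\<psi> t \<le> 1 \<longrightarrow> \<phi>\<^sub>x (\<beta> * t) \<le> \<psi> t + ennreal C) \<and>
      (\<phi>\<^sub>x t \<le> 1 \<longrightarrow> \<psi> (\<beta> * t) \<le> \<phi>\<^sub>x t + ennreal C)) \<longleftrightarrow>
    dominated_on_sublevel 1 \<beta> \<phi>\<^sub>x \<psi> C \<and> dominated_on_sublevel 1 \<beta> \<psi> \<phi>\<^sub>x C" for \<psi> \<phi>\<^sub>x \<beta> C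
    by (auto simp: dominated_on_sublevel_def)
  show ?thesis
    unfolding two_sided
    using A2w_imp_dominated_weak_Phi[OF sf \<omega> \<phi> \<open>1 \<le> a\<close>]
      dominated_weak_Phi_imp_A2w[OF sf \<phi> \<open>1 \<le> a\<close>] by blast
qed

end
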